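(* Let $\mathcal{A}$ be a complete deterministic timed automaton (CTA). All invalid reset-clocked words of $\mathcal{A}$ belong to the same equivalence class of $\sim_{\mathscr{L}_r(\mathcal{A})}$; that is, for any two reset-clocked words $\gamma_{r1},\gamma_{r2}$ that are not valid for $\mathcal{A}$, $\gamma_{r1}\sim_{\mathscr{L}_r(\mathcal{A})}\gamma_{r2}$.
   Context: Let $\Sigma$ be a finite alphabet and $\mathcal{C}=\{c_1,\dots,c_m\}$ a finite set of clocks. A clock constraint is a finite conjunction of atomic constraints $c\sim k$ ($c\in\mathcal{C}$, $k\in\mathbb{N}$, ${\sim}\in\{<,\le,=,\ge,>\}$). A timed automaton is $\mathcal{A}=(\Sigma,L,l_0,F,\mathcal{C},\Delta)$ with finite location set $L$, initial $l_0$, accepting $F\subseteq L$, transitions $\Delta\subseteq L\times\Sigma\times\Phi(\mathcal{C})\times2^{\mathcal{C}}\times L$. A run over a delay-timed word $(\sigma_1,t_1)\cdots(\sigma_n,t_n)$ is $(l_0,\nu_0)\xrightarrow{t_1,\sigma_1}\cdots\xrightarrow{t_n,\sigma_n}(l_n,\nu_n)$ with $\nu_0\equiv0$ and transitions $(l_{i-1},\sigma_i,\phi_i,\mathcal{B}_i,l_i)\in\Delta$ with $\nu_{i-1}+t_i$ satisfying $\phi_i$ and $\nu_i$ obtained from $\nu_{i-1}+t_i$ by setting clocks in $\mathcal{B}_i$ to $0$; accepting if $l_n\in F$. $\mathcal{A}$ is a CTA if every delay-timed word has exactly one run. The reset-clocked word of the run is $(\sigma_1,\mathbf{v}_1,\mathbf{b}_1)\cdots(\sigma_n,\mathbf{v}_n,\mathbf{b}_n)$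 with $\mathbf{v}_i=\nu_{i-1}+t_i\in\mathbb{R}_{\ge0}^m$ and $\mathbf{b}_{i,j}=\top$ iff $c_j\in\mathcal{B}_i$ (else $\bot$). $\mathscr{L}_r(\mathcal{A})$ is the set of reset-clocked words of accepting runs. A reset-clocked word (any element of $(\Sigma\times\mathbb{R}_{\ge0}^m\times\{\top,\bot\}^m)^*$) is valid for $\mathcal{A}$ if it is the reset-clocked word of some run of $\mathcal{A}$, invalid otherwise. $resets(\cdot)$ returns $\mathbf{b}_1,\dots,\mathbf{b}_n$; $vw(\cdot)$ drops resets. Regions: with $\kappa(c)$ the largest integer in guards of $\mathcal{A}$ over $c$, valuations $\nu,\nu'$ are region-equivalent iff (i) for all $c$, $\lfloor\nu(c)\rfloor=\lfloor\nu'(c)\rfloor$ or both exceed $\kappa(c)$; (ii) for $c$ with $\nu(c)\le\kappa(c)$, $\mathrm{frac}(\nu(c))=0$ iff $\mathrm{frac}(\nu'(c))=0$; (iii) for $c_i,c_j$ with $\nu(c_i)\le\kappa(c_i),\nu(c_j)\le\kappa(c_j)$, $\mathrm{frac}(\nu(c_i))\le\mathrm{frac}(\nu(c_j))$ iff $\mathrm{frac}(\nu'(c_i))\le\mathrm{frac}(\nu'(c_j))$. A region word is a finite sequence of pairs $(\sigma,R)$ with $R$ a region; a clocked word maps componentwise to its region word $\llbracket\cdot\rrbracket$. $\mathit{vs}_{\mathcal{A}}(\gamma_r,\xi)$ is the set of reset-clocked $\gamma_r'$ with $\llbracket vw(\gamma_r')\rrbracket=\xi$ and $\gamma_r\gamma_r'$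 valid for $\mathcal{A}$. $\gamma_{r1}\sim_{\mathscr{L}_r(\mathcal{A})}\gamma_{r2}$ holds iff for every region word $\xi$ and all $\gamma_{r1}'\in\mathit{vs}_{\mathcal{A}}(\gamma_{r1},\xi)$, $\gamma_{r2}'\in\mathit{vs}_{\mathcal{A}}(\gamma_{r2},\xi)$: $\gamma_{r1}\gamma_{r1}'\in\mathscr{L}_r(\mathcal{A})$ iff $\gamma_{r2}\gamma_{r2}'\in\mathscr{L}_r(\mathcal{A})$, and $resets(\gamma_{r1}')=resets(\gamma_{r2}')$. *)

theory Defs
  imports Complex_Main
begin

text \<open>Alphabet = UNIV of a finite type 's; clocks = UNIV of a finite type 'c;
  valuations are functions 'c => real; reset vectors are 'c => bool (True = reset).\<close>

datatype cmp = Lt | Le | Eq | Ge | Gt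

type_synonym 'c atom = "'c \<times> cmp \<times> nat"
type_synonym 'c constr = "'c atom list"
type_synonym 'c val = "'c \<Rightarrow> real"

record ('s, 'c, 'l) ta =
  ta_locs :: "'l set"
  ta_init :: 'l
  ta_final :: "'l set"
  ta_trans :: "('l \<times> 's \<times> 'c constr \<times> 'c set \<times> 'l) set"

definition ta_wf :: "('s::finite, 'c::finite, 'l) ta \<Rightarrow> bool" where
  "ta_wf A \<longleftrightarrow> finite (ta_locs A) \<and> ta_init A \<in> ta_locs A \<and> ta_final A \<subseteq> ta_locs A
     \<and> finite (ta_trans A)
     \<and> (\<forall>(l, \<sigma>, \<phi>, B, l') \<in> ta_trans A. l \<in> ta_locs A \<and> l' \<in> ta_locs A)"

fun sat_atom :: "'c val \<Rightarrow> 'c atom \<Rightarrow> bool" where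
  "sat_atom \<nu> (c, Lt, k) = (\<nu> c < real k)"
| "sat_atom \<nu> (c, Le, k) = (\<nu> c \<le> real k)"
| "sat_atom \<nu> (c, Eq, k) = (\<nu> c = real k)"
| "sat_atom \<nu> (c, Ge, k) = (\<nu> c \<ge> real k)"
| "sat_atom \<nu> (c, Gt, k) = (\<nu> c > real k)"

definition sat :: "'c val \<Rightarrow> 'c constr \<Rightarrow> bool" where
  "sat \<nu> \<phi> \<longleftrightarrow> (\<forall>a \<in> set \<phi>. sat_atom \<nu> a)"

definition delay :: "'c val \<Rightarrow> real \<Rightarrow> 'c val" where
  "delay \<nu> t = (\<lambda>c. \<nu> c + t)"

definition reset :: "'c val \<Rightarrow> 'c set \<Rightarrow> 'c val" where
  "reset \<nu> B = (\<lambda>c. if c \<in> B then 0 else \<nu> c)"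

text \<open>path A (l,nu) dw ts rw (l',nu'): a run from configuration (l,nu) over the
  delay-timed word dw, taking the transitions ts, producing the reset-clocked word rw,
  and ending in configuration (l',nu').\<close>
inductive path :: "('s, 'c, 'l) ta \<Rightarrow> 'l \<times> 'c val \<Rightarrow> ('s \<times> real) list
    \<Rightarrow> ('l \<times> 's \<times> 'c constr \<times> 'c set \<times> 'l) list
    \<Rightarrow> ('s \<times> 'c val \<times> ('c \<Rightarrow> bool)) list \<Rightarrow> 'l \<times> 'c val \<Rightarrow> bool"
  for A where
  path_nil: "path A s [] [] [] s"
| path_step: "\<lbrakk> (l, \<sigma>, \<phi>, B, l1) \<in> ta_trans A; t \<ge> 0; sat (delay \<nu> t) \<phi>;
      path A (l1, reset (delay \<nu> t) B) dw ts rw s' \<rbrakk>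
    \<Longrightarrow> path A (l, \<nu>) ((\<sigma>, t) # dw) ((l, \<sigma>, \<phi>, B, l1) # ts)
           ((\<sigma>, delay \<nu> t, (\<lambda>c. c \<in> B)) # rw) s'"

definition init_conf :: "('s, 'c, 'l) ta \<Rightarrow> 'l \<times> 'c val" where
  "init_conf A = (ta_init A, (\<lambda>_. 0))"

definition delay_word :: "('s \<times> real) list \<Rightarrow> bool" where
  "delay_word dw \<longleftrightarrow> (\<forall>(\<sigma>, t) \<in> set dw. t \<ge> 0)"

definition is_CTA :: "('s, 'c, 'l) ta \<Rightarrow> bool" where
  "is_CTA A \<longleftrightarrow> (\<forall>dw. delay_word dw \<longrightarrow>
      (\<exists>!ts. \<exists>rw s'. path A (init_conf A) dw ts rw s'))"

definition rc_word :: "('s \<times> 'c val \<times> ('c \<Rightarrow> bool)) list \<Rightarrow> bool" where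
  "rc_word \<gamma> \<longleftrightarrow> (\<forall>(\<sigma>, v, b) \<in> set \<gamma>. \<forall>c. v c \<ge> 0)"

definition valid :: "('s, 'c, 'l) ta \<Rightarrow> ('s \<times> 'c val \<times> ('c \<Rightarrow> bool)) list \<Rightarrow> bool" where
  "valid A \<gamma> \<longleftrightarrow> (\<exists>dw ts s'. path A (init_conf A) dw ts \<gamma> s')"

definition Lr :: "('s, 'c, 'l) ta \<Rightarrow> ('s \<times> 'c val \<times> ('c \<Rightarrow> bool)) list set" where
  "Lr A = {\<gamma>. \<exists>dw ts l \<nu>. path A (init_conf A) dw ts \<gamma> (l, \<nu>) \<and> l \<in> ta_final A}"

definition resets :: "('s \<times> 'c val \<times> ('c \<Rightarrow> bool)) list \<Rightarrow> ('c \<Rightarrow> bool) list" where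
  "resets \<gamma> = map (\<lambda>(\<sigma>, v, b). b) \<gamma>"

definition vw :: "('s \<times> 'c val \<times> ('c \<Rightarrow> bool)) list \<Rightarrow> ('s \<times> 'c val) list" where
  "vw \<gamma> = map (\<lambda>(\<sigma>, v, b). (\<sigma>, v)) \<gamma>"

definition kappa :: "('s, 'c, 'l) ta \<Rightarrow> 'c \<Rightarrow> nat" where
  "kappa A c = Max ({k. \<exists>l \<sigma> \<phi> B l' op. (l, \<sigma>, \<phi>, B, l') \<in> ta_trans A
                         \<and> (c, op, k) \<in> set \<phi>} \<union> {0})"

definition region_eq :: "('s, 'c, 'l) ta \<Rightarrow> 'c val \<Rightarrow> 'c val \<Rightarrow> bool" where
  "region_eq A \<nu> \<nu>' \<longleftrightarrow>
     (\<forall>c. \<lfloor>\<nu> c\<rfloor> = \<lfloor>\<nu>' c\<rfloor> \<or> (\<nu> c > real (kappa A c) \<and> \<nu>' c > real (kappa A c)))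
   \<and> (\<forall>c. \<nu> c \<le> real (kappa A c) \<longrightarrow> (frac (\<nu> c) = 0 \<longleftrightarrow> frac (\<nu>' c) = 0))
   \<and> (\<forall>ci cj. \<nu> ci \<le> real (kappa A ci) \<and> \<nu> cj \<le> real (kappa A cj) \<longrightarrow>
        (frac (\<nu> ci) \<le> frac (\<nu> cj) \<longleftrightarrow> frac (\<nu>' ci) \<le> frac (\<nu>' cj)))"

definition region_of :: "('s, 'c, 'l) ta \<Rightarrow> 'c val \<Rightarrow> 'c val set" where
  "region_of A \<nu> = {\<nu>'. (\<forall>c. \<nu>' c \<ge> 0) \<and> region_eq A \<nu> \<nu>'}"

definition regions :: "('s, 'c, 'l) ta \<Rightarrow> 'c val set set" where
  "regions A = {region_of A \<nu> | \<nu>. \<forall>c. \<nu> c \<ge> 0}"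

definition region_words :: "('s, 'c, 'l) ta \<Rightarrow> ('s \<times> 'c val set) list set" where
  "region_words A = {\<xi>. \<forall>(\<sigma>, R) \<in> set \<xi>. R \<in> regions A}"

definition region_word_of :: "('s, 'c, 'l) ta \<Rightarrow> ('s \<times> 'c val) list \<Rightarrow> ('s \<times> 'c val set) list" where
  "region_word_of A w = map (\<lambda>(\<sigma>, v). (\<sigma>, region_of A v)) w"

definition vs :: "('s, 'c, 'l) ta \<Rightarrow> ('s \<times> 'c val \<times> ('c \<Rightarrow> bool)) list
    \<Rightarrow> ('s \<times> 'c val set) list \<Rightarrow> ('s \<times> 'c val \<times> ('c \<Rightarrow> bool)) list set" where
  "vs A \<gamma> \<xi> = {\<gamma>'. rc_word \<gamma>' \<and> region_word_of A (vw \<gamma>') = \<xi> \<and> valid A (\<gamma> @ \<gamma>')}"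

definition rc_equiv :: "('s, 'c, 'l) ta \<Rightarrow> ('s \<times> 'c val \<times> ('c \<Rightarrow> bool)) list
    \<Rightarrow> ('s \<times> 'c val \<times> ('c \<Rightarrow> bool)) list \<Rightarrow> bool" where
  "rc_equiv A \<gamma>1 \<gamma>2 \<longleftrightarrow> (\<forall>\<xi> \<in> region_words A. \<forall>\<gamma>1' \<in> vs A \<gamma>1 \<xi>. \<forall>\<gamma>2' \<in> vs A \<gamma>2 \<xi>.
      (\<gamma>1 @ \<gamma>1' \<in> Lr A \<longleftrightarrow> \<gamma>2 @ \<gamma>2' \<in> Lr A) \<and> resets \<gamma>1' = resets \<gamma>2')"

end

theory Submission
  imports Defs
begin

text \<open>Validity is prefix-closed, so an invalid word has no valid extension: every set
  \<open>vs A \<gamma>1 \<xi>\<close> is empty and the condition defining \<open>rc_equiv\<close> holds vacuously.\<close>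

lemma path_prefix_of_rc_word:
  assumes "path A s dw ts (rw1 @ rw2) s'"
  shows "\<exists>dw1 ts1 s1. path A s dw1 ts1 rw1 s1"
  using assms
proof (induction s dw ts "rw1 @ rw2" s' arbitrary: rw1 rule: path.induct)
  case (path_nil s)
  then show ?case using path.path_nil by blast
next
  case (path_step l \<sigma> \<phi> B l1 t \<nu> dw ts rw s')
  show ?case
  proof (cases rw1)
    case Nil
    then show ?thesis using path.path_nil by blast
  next
    case (Cons x xs)
    with path_step.hyps have x: "x = (\<sigma>, delay \<nu> t, (\<lambda>c. c \<in> B))" and "rw = xs @ rw2"
      by auto
    then obtain dw1 ts1 s1 where "path A (l1, reset (delay \<nu> t) B) dw1 ts1 xs s1"
      using path_step.hyps by blast
    from path.path_step[OF path_step.hyps(1-3) this] show ?thesis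
      using Cons x by blast
  qed
qed

lemma valid_appendD: "valid A (\<gamma> @ \<gamma>') \<Longrightarrow> valid A \<gamma>"
  unfolding valid_def using path_prefix_of_rc_word by blast

lemma vs_empty_if_not_valid: "\<not> valid A \<gamma> \<Longrightarrow> vs A \<gamma> \<xi> = {}"
  unfolding vs_def using valid_appendD by blast

theorem lemma3p9:
  fixes A :: "('s::finite, 'c::finite, 'l) ta"
    and \<gamma>1 \<gamma>2 :: "('s \<times> 'c val \<times> ('c \<Rightarrow> bool)) list"
  assumes "ta_wf A" and "is_CTA A"
    and "rc_word \<gamma>1" and "rc_word \<gamma>2"
    and "\<not> valid A \<gamma>1" and "\<not> valid A \<gamma>2"
  shows "rc_equiv A \<gamma>1 \<gamma>2"
  using vs_empty_if_not_valid[OF \<open>\<not> valid A \<gamma>1\<close>] unfolding rc_equiv_def by blast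

end
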